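(* Let $R=\mathbb{Z}_4+u\mathbb{Z}_4$ with $u^2=0$. Let $\tau:R^n\to R^n$ be the $(1+2u)$-constacyclic shift $\tau(c_0,\dots,c_{n-1})=((1+2u)c_{n-1},c_0,\dots,c_{n-2})$, let $\sigma:\mathbb{Z}_4^{2n}\to\mathbb{Z}_4^{2n}$ be the cyclic shift $\sigma(x_0,\dots,x_{2n-1})=(x_{2n-1},x_0,\dots,x_{2n-2})$, and let $\phi:R^n\to\mathbb{Z}_4^{2n}$ be the Gray map $\phi(c_0,\dots,c_{n-1})=(b_0,\dots,b_{n-1},2a_0+b_0,\dots,2a_{n-1}+b_{n-1})$ where $c_i=a_i+ub_i$ with $a_i,b_i\in\mathbb{Z}_4$. Then $\phi\circ\tau=\sigma\circ\phi$. *)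

theory Defs
  imports Main "HOL-Library.Numeral_Type"
begin

text \<open>The ring Z4 is the library type 4 (integers modulo 4).
  An element a + u b of R = Z4 + u Z4 (u^2 = 0) is represented by the pair (a, b).\<close>

type_synonym Z4 = "4"
type_synonym R = "Z4 \<times> Z4"

definition R_add :: "R \<Rightarrow> R \<Rightarrow> R" where
  "R_add x y = (fst x + fst y, snd x + snd y)"

text \<open>(a + u b)(c + u d) = ac + u (ad + bc), since u^2 = 0.\<close>
definition R_mult :: "R \<Rightarrow> R \<Rightarrow> R" where
  "R_mult x y = (fst x * fst y, fst x * snd y + snd x * fst y)"

definition one_plus_2u :: R where
  "one_plus_2u = (1, 2)"

definition tau :: "R list \<Rightarrow> R list" where
  "tau c = (if c = [] then [] else R_mult one_plus_2u (last c) # butlast c)"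

definition sigma :: "Z4 list \<Rightarrow> Z4 list" where
  "sigma x = (if x = [] then [] else last x # butlast x)"

definition gray :: "R list \<Rightarrow> Z4 list" where
  "gray c = map snd c @ map (\<lambda>ab. 2 * fst ab + snd ab) c"

end

theory Submission
  imports Defs
begin

text \<open>Write c = cs @ [a + u b]. The last coordinate (1+2u)(a + u b) = a + u (2a + b) is moved to the
  front, so both sides start with the block 2a + b, map snd cs, followed by the block
  2a + (2a + b), map (2 fst + snd) cs; and 2a + (2a + b) = 4a + b = b in Z4.\<close>

lemma Z4_double_double_add: "2 * a + (2 * a + b) = (b::Z4)"
proof -
  have "2 * a + (2 * a + b) = 4 * a + b" by (simp add: algebra_simps)
  also have "(4::Z4) = 0" by simp
  finally show ?thesis by simp
qed

lemma R_mult_one_plus_2u: "R_mult one_plus_2u (a, b) = (a, 2 * a + b)"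
  by (simp add: R_mult_def one_plus_2u_def)

lemma gray_tau_snoc: "gray (tau (cs @ [(a, b)])) = sigma (gray (cs @ [(a, b)]))"
  by (simp add: gray_def tau_def sigma_def R_mult_one_plus_2u Z4_double_double_add butlast_append)

theorem proposition5p1:
  fixes n :: nat and c :: "R list"
  assumes "n \<ge> 1" and "length c = n"
  shows "gray (tau c) = sigma (gray c)"
proof -
  from assms have "c \<noteq> []" by auto
  then obtain cs a b where "c = cs @ [(a, b)]"
    by (metis rev_exhaust surj_pair)
  then show ?thesis by (simp only: gray_tau_snoc)
qed

end
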